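(* Assume $q\equiv1\pmod 4$. Then $S^{(3)}(\beta)=0$ if and only if \[ \begin{cases} K(\chi)+\zeta_4K(\eta_{1/4}\chi)-K(\eta_{1/2}\chi)-\zeta_4K(\eta_{3/4}\chi)\equiv0 \pmod{8\mathcal{P}\,\mathbb{Z}[\zeta_{4k}]} & \text{if } q\equiv1\pmod 8,\\ K(\chi)-\zeta_4K(\eta_{1/4}\chi)-K(\eta_{1/2}\chi)+\zeta_4K(\eta_{3/4}\chi)\equiv0 \pmod{8\mathcal{P}\,\mathbb{Z}[\zeta_{4k}]} & \text{if } q\equiv5\pmod 8. \end{cases} \]
   Context: Let $p$ be an odd prime, $m\ge1$, $q=p^m$, $\alpha$ a primitive element of $\mathbb{F}_q$, and $T=q-1$. The binary SLCE sequence $(s_n)_{n\ge0}$ is defined as follows: $s_n=1$ if $\alpha^n+1$ is a nonzero non-square of $\mathbb{F}_q$, and $s_n=0$ otherwise. Put $S(X)=\sum_{n=0}^{T-1}s_nX^n\in\mathbb{F}_2[X]$. For an integer $t\ge0$, the $t$-th Hasse derivative is $S^{(t)}(X)=\sum_{n=t}^{T-1}\binom{n}{t}s_nX^{n-t}$, with coefficients reduced mod $2$. Let $\beta$ be an element of an algebraic closure of $\mathbb{F}_2$ with $\beta^T=1$ and multiplicative order $k>1$ (so $k$ is odd). Let $f$ be the order of $2$ modulo $k$, and write $\zeta_N=e^{2\pi i/N}$. Let $\mathcal{P}$ be a prime ideal of $\mathbb{Z}[\zeta_k]$ containing $2$. Fix a field isomorphism $\phi:\mathbb{F}_2(\beta)=\mathbb{F}_{2^f}\to\mathbb{Z}[\zeta_k]/\mathcal{P}$,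 and let $\zeta$ be the unique complex $k$-th root of unity with $\phi(\beta)=\zeta+\mathcal{P}$. Multiplicative characters of $\mathbb{F}_q$ are homomorphisms $\mathbb{F}_q^*\to\mathbb{C}^*$, extended by value $0$ at $0$. For a rational $j$ with $(q-1)j\in\mathbb{Z}$, $\eta_j$ is the character with $\eta_j(\alpha)=e^{2\pi ij}$. Let $\rho=\eta_{1/2}$ be the quadratic character. Let $\chi$ be the character with $\chi(\alpha^n)=\zeta^n$. For a character $\psi$, set $K(\psi)=\sum_{x\in\mathbb{F}_q}\rho(x)\psi(1-x)$. For an ideal $I$ of $\mathbb{Z}[\zeta_k]$, $I\,\mathbb{Z}[\zeta_{4k}]$ is the ideal it generates in $\mathbb{Z}[\zeta_{4k}]$. *)

theory Defs
  imports Complex_Main "HOL-Computational_Algebra.Polynomial"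
begin

definition primitive_elem :: "'a::{field,finite} \<Rightarrow> bool" where
  "primitive_elem \<alpha> \<longleftrightarrow> \<alpha> \<noteq> 0 \<and> (\<forall>x. x \<noteq> 0 \<longrightarrow> (\<exists>n::nat. \<alpha> ^ n = x))"

definition slce :: "'a::{field,finite} \<Rightarrow> nat \<Rightarrow> nat" where
  "slce \<alpha> n = (if \<alpha> ^ n + 1 \<noteq> 0 \<and> \<not> (\<exists>y. y ^ 2 = \<alpha> ^ n + 1) then 1 else 0)"

text \<open>t-th Hasse derivative of S(X) = sum_{n<T} s_n X^n, evaluated at beta in a field of
  characteristic 2; coefficients reduced mod 2.\<close>
definition hasse_eval :: "(nat \<Rightarrow> nat) \<Rightarrow> nat \<Rightarrow> nat \<Rightarrow> 'b::field \<Rightarrow> 'b" where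
  "hasse_eval s T t \<beta> = (\<Sum>n\<in>{t..<T}. of_nat (((n choose t) * s n) mod 2) * \<beta> ^ (n - t))"

definition dlog :: "'a::{field,finite} \<Rightarrow> 'a \<Rightarrow> nat" where
  "dlog \<alpha> x = (LEAST n. \<alpha> ^ n = x)"

definition eta :: "'a::{field,finite} \<Rightarrow> real \<Rightarrow> 'a \<Rightarrow> complex" where
  "eta \<alpha> j x = (if x = 0 then 0 else exp (2 * of_real pi * \<i> * of_real j * of_nat (dlog \<alpha> x)))"

definition chi :: "'a::{field,finite} \<Rightarrow> complex \<Rightarrow> 'a \<Rightarrow> complex" where
  "chi \<alpha> z x = (if x = 0 then 0 else z ^ dlog \<alpha> x)"

definition Ksum :: "'a::{field,finite} \<Rightarrow> ('a \<Rightarrow> complex) \<Rightarrow> complex" where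
  "Ksum \<alpha> \<psi> = (\<Sum>x\<in>(UNIV::'a set). eta \<alpha> (1/2) x * \<psi> (1 - x))"

definition zetaN :: "nat \<Rightarrow> complex" where
  "zetaN N = exp (2 * of_real pi * \<i> / of_nat N)"

definition cyc_int :: "nat \<Rightarrow> complex set" where
  "cyc_int N = {poly (map_poly of_int g) (zetaN N) | g :: int poly. True}"

definition is_ideal :: "complex set \<Rightarrow> complex set \<Rightarrow> bool" where
  "is_ideal R I \<longleftrightarrow> I \<subseteq> R \<and> 0 \<in> I \<and> (\<forall>x\<in>I. \<forall>y\<in>I. x + y \<in> I) \<and> (\<forall>x\<in>I. - x \<in> I)
     \<and> (\<forall>r\<in>R. \<forall>x\<in>I. r * x \<in> I)"

definition is_prime_ideal :: "complex set \<Rightarrow> complex set \<Rightarrow> bool" where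
  "is_prime_ideal R I \<longleftrightarrow> is_ideal R I \<and> I \<noteq> R \<and> (\<forall>a\<in>R. \<forall>b\<in>R. a * b \<in> I \<longrightarrow> a \<in> I \<or> b \<in> I)"

definition ideal_span :: "complex set \<Rightarrow> complex set \<Rightarrow> complex set" where
  "ideal_span R A = \<Inter> {J. is_ideal R J \<and> A \<subseteq> J}"

definition coset :: "complex set \<Rightarrow> complex \<Rightarrow> complex set" where
  "coset P x = (\<lambda>p. x + p) ` P"

definition quot_set :: "complex set \<Rightarrow> complex set \<Rightarrow> complex set set" where
  "quot_set R P = coset P ` R"

text \<open>F_2(beta) inside a field of characteristic 2: since beta is algebraic (beta^T = 1),
  F_2(beta) = F_2[beta], the set of integer polynomials evaluated at beta.\<close>
definition F2_adj :: "'b::field \<Rightarrow> 'b set" where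
  "F2_adj \<beta> = {poly (map_poly of_int g) \<beta> | g :: int poly. True}"

definition quot_iso :: "('b::field \<Rightarrow> complex set) \<Rightarrow> 'b set \<Rightarrow> complex set \<Rightarrow> complex set \<Rightarrow> bool" where
  "quot_iso \<phi> F R P \<longleftrightarrow> bij_betw \<phi> F (quot_set R P) \<and>
     (\<forall>a\<in>F. \<forall>b\<in>F. \<forall>x\<in>\<phi> a. \<forall>y\<in>\<phi> b.
        \<phi> (a + b) = coset P (x + y) \<and> \<phi> (a * b) = coset P (x * y))"

definition mult_order :: "'b::field \<Rightarrow> nat \<Rightarrow> bool" where
  "mult_order \<beta> k \<longleftrightarrow> 0 < k \<and> \<beta> ^ k = 1 \<and> (\<forall>d. 0 < d \<and> d < k \<longrightarrow> \<beta> ^ d \<noteq> 1)"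

end

theory Submission
  imports Defs
begin

text \<open>
  Put \<open>T = q - 1\<close> and let \<open>\<chi>_w\<close> be the character with \<open>\<chi>_w(\<alpha>) = w\<close>. From
  \<open>2 s_n = 1 - \<rho>(\<alpha>^n + 1) - [\<alpha>^n = -1]\<close> and the substitution \<open>x = \<alpha>^n + 1\<close> one gets
  \<open>\<Sum>n<T. 2 s_n w^n = - w^(T/2) (K(\<chi>_w) + 1)\<close> for every \<open>T\<close>-th root of unity \<open>w \<noteq> 1\<close>.
  As \<open>n choose 3\<close> is odd iff \<open>n \<equiv> 3 (mod 4)\<close>, \<open>\<beta>^3 S\<^sup>(\<^sup>3\<^sup>)(\<beta>)\<close> is the sum \<open>A(\<beta>)\<close> of the \<open>\<beta>^n\<close>
  with \<open>n \<equiv> 3 (mod 4)\<close> and \<open>s_n = 1\<close>, and averaging the generating sum over the twists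
  \<open>w = \<zeta>, \<i>\<zeta>, -\<zeta>, -\<i>\<zeta>\<close> expresses \<open>-8 A(\<zeta>)\<close> as the combination of \<open>K\<close>'s in the statement,
  with sign \<open>\<i>^(T/2) = \<plusminus>1\<close> according to \<open>q mod 8\<close>. The isomorphism \<open>\<phi>\<close> turns
  \<open>S\<^sup>(\<^sup>3\<^sup>)(\<beta>) = 0\<close> into \<open>A(\<zeta>) \<in> P\<close>. Finally, for odd \<open>k\<close> every element of \<open>\<int>[\<zeta>_4k]\<close> is
  \<open>c + d\<i>\<close> with \<open>c, d \<in> \<int>[\<zeta>_k]\<close>; so \<open>8A \<in> 8P\<int>[\<zeta>_4k]\<close> gives \<open>A - a = b\<i>\<close> with
  \<open>a, b \<in> P\<close>, and \<open>(A - a)^2 = -b^2 \<in> P\<close> forces \<open>A \<in> P\<close>.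
\<close>

section \<open>The subring \<open>\<int>[z]\<close>\<close>

definition int_adj :: "'a::comm_ring_1 \<Rightarrow> 'a set" where
  "int_adj z = {poly (map_poly of_int g) z | g :: int poly. True}"

lemma cyc_int_eq_int_adj: "cyc_int N = int_adj (zetaN N)"
  by (simp add: cyc_int_def int_adj_def)

lemma F2_adj_eq_int_adj: "F2_adj \<beta> = int_adj \<beta>"
  by (simp add: F2_adj_def int_adj_def)

lemma map_poly_of_int_add:
  "map_poly (of_int :: int \<Rightarrow> 'a::comm_ring_1) (g + h) = map_poly of_int g + map_poly of_int h"
  by (rule poly_eqI) (simp add: coeff_map_poly)

lemma int_adj_add: "x \<in> int_adj z \<Longrightarrow> y \<in> int_adj z \<Longrightarrow> x + y \<in> int_adj z"
  unfolding int_adj_def by clarsimp (metis map_poly_of_int_add poly_add)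

lemma int_adj_of_int: "of_int a \<in> int_adj z"
  unfolding int_adj_def by (intro CollectI exI[of _ "[:a:]"]) (simp add: map_poly_pCons)

lemma int_adj_gen_mult: "x \<in> int_adj z \<Longrightarrow> z * x \<in> int_adj z"
  unfolding int_adj_def by clarsimp (rule exI[of _ "pCons 0 _"], simp add: map_poly_pCons)

lemma int_adj_minimal:
  assumes "\<And>a. of_int a \<in> S" and "\<And>x y. x \<in> S \<Longrightarrow> y \<in> S \<Longrightarrow> x + y \<in> S"
    and "\<And>x. x \<in> S \<Longrightarrow> z * x \<in> S"
  shows "int_adj z \<subseteq> S"
proof
  fix x assume "x \<in> int_adj z"
  then obtain g where "x = poly (map_poly of_int g) z" by (auto simp: int_adj_def)
  moreover have "poly (map_poly of_int g) z \<in> S" for g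
    by (induction g) (use assms(1)[of 0] in \<open>simp_all add: map_poly_pCons assms\<close>)
  ultimately show "x \<in> S" by simp
qed

lemma int_adj_0: "0 \<in> int_adj z" and int_adj_1: "1 \<in> int_adj z"
  using int_adj_of_int[of 0 z] int_adj_of_int[of 1 z] by simp_all

lemma int_adj_gen: "z \<in> int_adj z"
  using int_adj_gen_mult[OF int_adj_1] by simp

lemma int_adj_of_int_mult: "x \<in> int_adj z \<Longrightarrow> of_int a * x \<in> int_adj z"
  unfolding int_adj_def by clarsimp (rule exI[of _ "smult a _"], simp add: map_poly_smult)

lemma int_adj_mult:
  assumes "x \<in> int_adj z" "y \<in> int_adj z" shows "x * y \<in> int_adj z"
proof -
  have "int_adj z \<subseteq> {x. x * y \<in> int_adj z}"
    by (rule int_adj_minimal)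
      (auto simp: distrib_right int_adj_add mult.assoc assms(2)
        intro: int_adj_gen_mult int_adj_of_int_mult)
  then show ?thesis using assms(1) by blast
qed

lemma int_adj_uminus: "x \<in> int_adj z \<Longrightarrow> - x \<in> int_adj z"
  using int_adj_of_int_mult[of x z "-1"] by simp

lemma int_adj_diff: "x \<in> int_adj z \<Longrightarrow> y \<in> int_adj z \<Longrightarrow> x - y \<in> int_adj z"
  using int_adj_add[of x z "- y"] int_adj_uminus[of y z] by simp

lemma int_adj_power: "x \<in> int_adj z \<Longrightarrow> x ^ n \<in> int_adj z"
  by (induction n) (simp_all add: int_adj_1 int_adj_mult)

lemma int_adj_sum: "(\<And>i. i \<in> A \<Longrightarrow> f i \<in> int_adj z) \<Longrightarrow> sum f A \<in> int_adj z"
  by (induction A rule: infinite_finite_induct) (simp_all add: int_adj_0 int_adj_add)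

lemma int_adj_mono: "w \<in> int_adj z \<Longrightarrow> int_adj w \<subseteq> int_adj z"
  by (rule int_adj_minimal) (simp_all add: int_adj_of_int int_adj_add int_adj_mult)

lemma power_mod_eq: "(w::'a::monoid_mult) ^ T = 1 \<Longrightarrow> w ^ n = w ^ (n mod T)"
  by (metis div_mult_mod_eq mult.commute power_add power_mult power_one mult_1)

lemma finite_field_power_card_minus_1:
  fixes x :: "'a::{field,finite}" assumes "x \<noteq> 0"
  shows "x ^ (card (UNIV::'a set) - 1) = 1"
proof -
  let ?U = "UNIV - {0::'a}"
  have "prod (\<lambda>y. y) ?U = prod ((*) x) ?U"
    using assms by (intro prod.reindex_bij_witness[of _ "(*) x" "\<lambda>y. y / x"]) auto
  also have "\<dots> = x ^ card ?U * prod (\<lambda>y. y) ?U" by (simp add: prod.distrib)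
  finally have "x ^ card ?U = 1" by simp
  moreover have "card ?U = card (UNIV::'a set) - 1" by (simp add: card_Diff_singleton)
  ultimately show ?thesis by simp
qed

lemma finite_field_card_ge_2: "card (UNIV::'a::{field,finite} set) \<ge> 2"
  using card_mono[OF finite_UNIV, of "{0::'a, 1}"] by simp

lemma exp_2pi_i_quarter: "exp (2 * of_real pi * \<i> * of_real (1/4)) = \<i>"
  using cis_pi_half by (simp add: cis_conv_exp mult_ac)

lemma exp_2pi_i_half: "exp (2 * of_real pi * \<i> * of_real (1/2)) = -1"
  using exp_pi_i' by (simp add: mult_ac)

lemma exp_2pi_i_three_quarters: "exp (2 * of_real pi * \<i> * of_real (3/4)) = - \<i>"
proof -
  have "exp (2 * of_real pi * \<i> * of_real (3/4)) = cis (3/2 * pi)"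
    by (simp add: cis_conv_exp mult_ac)
  also have "\<dots> = - \<i>" using cos_3over2_pi sin_3over2_pi by (simp add: complex_eq_iff)
  finally show ?thesis .
qed

lemma zetaN_power: assumes "a > 0" shows "zetaN (a * b) ^ a = zetaN b"
proof -
  have "of_nat a * (2 * of_real pi * \<i> / of_nat (a * b)) = 2 * of_real pi * \<i> / (of_nat b :: complex)"
    using assms by (cases "b = 0") (simp_all add: field_simps)
  then show ?thesis by (simp only: zetaN_def exp_of_nat_mult[symmetric])
qed

lemma zetaN_power_self: assumes "N > 0" shows "zetaN N ^ N = 1"
proof -
  have "zetaN 1 = 1" unfolding zetaN_def by simp
  then show ?thesis using zetaN_power[of N 1] assms by simp
qed

lemma zetaN_4: "zetaN 4 = \<i>"
proof -
  have "2 * of_real pi * \<i> / of_nat 4 = 2 * of_real pi * \<i> * of_real (1/4)" by simp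
  then show ?thesis using exp_2pi_i_quarter by (simp only: zetaN_def)
qed

lemma fourth_roots_filter:
  "(1::complex) + \<i> * \<i> ^ n - (-1) ^ n - \<i> * (- \<i>) ^ n = (if n mod 4 = 3 then 4 else 0)"
proof -
  define r where "r = n mod 4"
  have reduce: "u ^ n = u ^ r" if "u ^ 4 = 1" for u :: complex
    using power_mod_eq[OF that] by (simp add: r_def)
  have "(-1::complex) ^ 4 = 1" "\<i> ^ 4 = 1" "(- \<i>) ^ 4 = 1" by (simp_all add: eval_nat_numeral)
  then have "(-1::complex) ^ n = (-1) ^ r" "\<i> ^ n = \<i> ^ r" "(- \<i>) ^ n = (- \<i>) ^ r"
    using reduce by blast+
  moreover have "r = 0 \<or> r = 1 \<or> r = 2 \<or> r = 3" unfolding r_def by arith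
  ultimately show ?thesis
    unfolding r_def[symmetric] by (elim disjE) (simp_all add: eval_nat_numeral)
qed

lemma mult_order_dvd: assumes "mult_order \<beta> k" "\<beta> ^ n = 1" shows "k dvd n"
proof -
  have "\<beta> ^ (n mod k) = 1" using assms power_mod_eq[of \<beta> k n] by (simp add: mult_order_def)
  then show ?thesis
    using assms(1) mod_less_divisor[of k n] by (auto simp: mult_order_def dvd_eq_mod_eq_0)
qed

lemma mult_order_odd_char_2:
  fixes \<beta> :: "'b::field"
  assumes "(2::'b) = 0" "mult_order \<beta> k" shows "odd k"
proof
  assume "even k"
  then obtain j where j: "k = 2 * j" ..
  have "(\<beta> ^ j + 1) ^ 2 = \<beta> ^ k + 2 * \<beta> ^ j + 1"
    by (simp add: j power2_eq_square power_mult algebra_simps)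
  also have "\<dots> = 0" using assms by (simp add: mult_order_def)
  finally have "\<beta> ^ j = - 1" by (simp add: eq_neg_iff_add_eq_0)
  also have "(- 1 :: 'b) = 1" using assms(1) by (simp add: eq_neg_iff_add_eq_0)
  finally show False using assms(2) j by (auto simp: mult_order_def)
qed

lemma mult_order_dvd_half:
  assumes "mult_order \<beta> k" "odd k" "\<beta> ^ n = 1" "even n" shows "k dvd n div 2"
proof -
  have "k dvd n div 2 * 2" using mult_order_dvd[OF assms(1,3)] assms(4) by simp
  then show ?thesis using assms(2) by (simp add: coprime_dvd_mult_left_iff)
qed

lemma odd_root_of_unity_fourth_power:
  fixes z :: "'a::monoid_mult"
  assumes "odd k" "z ^ k = 1" "z ^ 4 = 1" shows "z = 1"
proof -
  have "z ^ (k mod 4) = 1" using power_mod_eq[OF assms(3), of k] assms(2) by simp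
  moreover have "k mod 4 = 1 \<or> k mod 4 = 3" using assms(1) by presburger
  moreover have "z ^ 4 = z * z ^ 3" by (simp add: eval_nat_numeral)
  ultimately show ?thesis using assms(3) by auto
qed

lemma i_power_half_pred:
  assumes "(q::nat) mod 4 = 1" shows "\<i> ^ ((q - 1) div 2) = (if q mod 8 = 1 then 1 else -1)"
proof -
  have "(q - 1) div 2 = 4 * (q div 8) + (if q mod 8 = 1 then 0 else 2)" using assms by presburger
  then show ?thesis by (simp add: power_add power_mult)
qed

section \<open>The third Hasse derivative\<close>

lemma odd_choose_2_3:
  "(odd (n choose 2) \<longleftrightarrow> n mod 4 = 2 \<or> n mod 4 = 3) \<and> (odd (n choose 3) \<longleftrightarrow> n mod 4 = 3)"
proof (induction n)
  case (Suc n)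
  have step: "(odd (n + a) \<longleftrightarrow> Suc n mod 4 = 2 \<or> Suc n mod 4 = 3) \<and>
      (odd (a + b) \<longleftrightarrow> Suc n mod 4 = 3)"
    if "odd a \<longleftrightarrow> n mod 4 = 2 \<or> n mod 4 = 3" "odd b \<longleftrightarrow> n mod 4 = 3" for a b :: nat
    using that by presburger
  have "Suc n choose 2 = n + (n choose 2)" "Suc n choose 3 = (n choose 2) + (n choose 3)"
    by (simp_all add: numeral_eq_Suc)
  with step[of "n choose 2" "n choose 3"] Suc.IH show ?case by (simp only:)
qed (simp add: binomial_eq_0)

lemma odd_choose_3_iff: "odd (n choose 3) \<longleftrightarrow> n mod 4 = 3"
  using odd_choose_2_3 by blast

text \<open>For a 0-1 sequence \<open>s\<close>, the indices \<open>n < T\<close> where the coefficient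
  \<open>(n choose 3) s n\<close> of the third Hasse derivative is odd.\<close>
definition hasse3_support :: "(nat \<Rightarrow> nat) \<Rightarrow> nat \<Rightarrow> nat set" where
  "hasse3_support s T = {n. n < T \<and> n mod 4 = 3 \<and> s n = 1}"

lemma finite_hasse3_support: "finite (hasse3_support s T)"
  by (simp add: hasse3_support_def)

lemma zero_notin_hasse3_support: "0 \<notin> hasse3_support s T"
  by (simp add: hasse3_support_def)

lemma hasse_eval_3:
  assumes "\<And>n. s n \<le> 1"
  shows "hasse_eval s T 3 \<beta> * \<beta> ^ 3 = (\<Sum>n\<in>hasse3_support s T. \<beta> ^ n)"
proof -
  have parity: "((n choose 3) * s n) mod 2 = (if n mod 4 = 3 \<and> s n = 1 then 1 else 0)" for n
    using assms[of n] odd_choose_3_iff[of n] by (cases "s n") (auto simp: odd_iff_mod_2_eq_one)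
  have "hasse_eval s T 3 \<beta> * \<beta> ^ 3 = (\<Sum>n\<in>{3..<T}. of_nat (((n choose 3) * s n) mod 2) * \<beta> ^ n)"
    unfolding hasse_eval_def sum_distrib_right
    by (intro sum.cong) (simp_all add: mult.assoc flip: power_add)
  also have "\<dots> = (\<Sum>n\<in>{3..<T}. if n mod 4 = 3 \<and> s n = 1 then \<beta> ^ n else 0)"
    by (intro sum.cong) (simp_all add: parity)
  also have "\<dots> = (\<Sum>n\<in>hasse3_support s T. \<beta> ^ n)"
  proof -
    have "hasse3_support s T = {n \<in> {3..<T}. n mod 4 = 3 \<and> s n = 1}"
      by (auto simp: hasse3_support_def)
    then show ?thesis by (simp only: sum.inter_filter[OF finite_atLeastLessThan])
  qed
  finally show ?thesis .
qed

section \<open>Multiplicative characters of a finite field\<close>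

lemma slce_le_1: "slce \<alpha> n \<le> 1"
  by (simp add: slce_def)

lemma chi_zero [simp]: "chi \<alpha> w 0 = 0"
  by (simp add: chi_def)

lemma chi_times_chi: "chi \<alpha> u x * chi \<alpha> w x = chi \<alpha> (u * w) x"
  by (simp add: chi_def power_mult_distrib)

lemma eta_eq_chi: "eta \<alpha> j = chi \<alpha> (exp (2 * of_real pi * \<i> * of_real j))"
  by (rule ext) (simp add: eta_def chi_def exp_of_nat_mult[symmetric] mult_ac)

lemma eta_half: "eta \<alpha> (1/2) = chi \<alpha> (-1)"
  by (simp only: eta_eq_chi exp_2pi_i_half)

lemma sum_shift_one: "(\<Sum>x\<in>UNIV. g (x + 1)) = (\<Sum>x\<in>(UNIV::'a::{ring_1,finite} set). g x)"
  by (rule sum.reindex_bij_witness[of _ "\<lambda>x. x - 1" "\<lambda>x. x + 1"]) auto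

lemma Ksum_eta_times_chi:
  "Ksum \<alpha> (\<lambda>x. eta \<alpha> j x * chi \<alpha> w x) = Ksum \<alpha> (chi \<alpha> (exp (2 * of_real pi * \<i> * of_real j) * w))"
  by (simp add: eta_eq_chi chi_times_chi)

locale primitive_root =
  fixes \<alpha> :: "'a::{field,finite}" and T :: nat
  assumes primitive: "primitive_elem \<alpha>" and T_eq: "T = card (UNIV::'a set) - 1"
begin

lemma T_pos: "T > 0"
  using finite_field_card_ge_2[where 'a='a] T_eq by linarith

lemma alpha_nonzero: "\<alpha> \<noteq> 0"
  using primitive by (simp add: primitive_elem_def)

lemma alpha_power_mod: "\<alpha> ^ n = \<alpha> ^ (n mod T)"
  using power_mod_eq finite_field_power_card_minus_1[OF alpha_nonzero] T_eq by metis

lemma powers_alpha: "(\<lambda>n. \<alpha> ^ n) ` {..<T} = UNIV - {0}"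
proof
  show "(\<lambda>n. \<alpha> ^ n) ` {..<T} \<subseteq> UNIV - {0}" using alpha_nonzero by auto
  show "UNIV - {0} \<subseteq> (\<lambda>n. \<alpha> ^ n) ` {..<T}"
  proof
    fix x assume "x \<in> UNIV - {0::'a}"
    then obtain n where "\<alpha> ^ n = x" using primitive by (auto simp: primitive_elem_def)
    then show "x \<in> (\<lambda>n. \<alpha> ^ n) ` {..<T}"
      using alpha_power_mod T_pos by (intro image_eqI[of _ _ "n mod T"]) auto
  qed
qed

lemma inj_on_powers_alpha: "inj_on (\<lambda>n. \<alpha> ^ n) {..<T}"
  by (rule eq_card_imp_inj_on) (simp_all only: powers_alpha, simp_all add: card_Diff_singleton T_eq)

lemma alpha_power_eq_iff: "m < T \<Longrightarrow> n < T \<Longrightarrow> \<alpha> ^ m = \<alpha> ^ n \<longleftrightarrow> m = n"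
  using inj_on_powers_alpha by (auto simp: inj_on_def)

lemma assumes "x \<noteq> 0"
  shows alpha_power_dlog: "\<alpha> ^ dlog \<alpha> x = x" and dlog_less: "dlog \<alpha> x < T"
proof -
  obtain n where n: "\<alpha> ^ n = x" using primitive assms by (auto simp: primitive_elem_def)
  show "\<alpha> ^ dlog \<alpha> x = x" unfolding dlog_def by (rule LeastI[of _ n]) (rule n)
  have "dlog \<alpha> x \<le> n mod T"
    unfolding dlog_def using n alpha_power_mod by (intro Least_le) simp
  then show "dlog \<alpha> x < T" using T_pos by (meson le_less_trans mod_less_divisor)
qed

lemma dlog_power: "dlog \<alpha> (\<alpha> ^ n) = n mod T"
  using alpha_power_dlog[of "\<alpha> ^ n"] dlog_less[of "\<alpha> ^ n"] alpha_nonzero alpha_power_mod T_pos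
  by (subst alpha_power_eq_iff[symmetric]) auto

lemma sum_UNIV_powers: "(\<Sum>x\<in>UNIV. f x) = f 0 + (\<Sum>n<T. f (\<alpha> ^ n))"
proof -
  have "(\<Sum>x\<in>UNIV. f x) = f 0 + (\<Sum>x\<in>UNIV - {0}. f x)"
    by (metis finite_UNIV sum.remove UNIV_I)
  also have "(\<Sum>x\<in>UNIV - {0}. f x) = (\<Sum>n<T. f (\<alpha> ^ n))"
    unfolding powers_alpha[symmetric] by (simp add: sum.reindex[OF inj_on_powers_alpha])
  finally show ?thesis .
qed

lemma chi_alpha_power: "w ^ T = 1 \<Longrightarrow> chi \<alpha> w (\<alpha> ^ n) = w ^ n"
  using alpha_nonzero by (simp add: chi_def dlog_power power_mod_eq[of w T n])

lemma chi_mult: assumes "w ^ T = 1" shows "chi \<alpha> w (x * y) = chi \<alpha> w x * chi \<alpha> w y"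
proof (cases "x = 0 \<or> y = 0")
  case False
  then have "x * y = \<alpha> ^ (dlog \<alpha> x + dlog \<alpha> y)" using alpha_power_dlog by (simp add: power_add)
  then have "chi \<alpha> w (x * y) = w ^ (dlog \<alpha> x + dlog \<alpha> y)" using chi_alpha_power[OF assms] by simp
  then show ?thesis using False by (simp add: chi_def power_add)
qed (auto simp: chi_def)

lemma alpha_power_half: assumes "even T" shows "\<alpha> ^ (T div 2) = -1"
proof -
  have "(\<alpha> ^ (T div 2)) ^ 2 = \<alpha> ^ T"
    using assms by (simp flip: power_mult)
  also have "\<dots> = \<alpha> ^ 0" using alpha_power_mod[of T] by simp
  finally have "\<alpha> ^ (T div 2) = 1 \<or> \<alpha> ^ (T div 2) = -1" by (simp add: power2_eq_1_iff)
  moreover have "\<alpha> ^ (T div 2) \<noteq> \<alpha> ^ 0"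
    using alpha_power_eq_iff[of "T div 2" 0] T_pos assms by auto
  ultimately show ?thesis by simp
qed

lemma alpha_power_eq_minus_1_iff:
  assumes "even T" "n < T" shows "\<alpha> ^ n = -1 \<longleftrightarrow> n = T div 2"
  using alpha_power_eq_iff[of n "T div 2"] alpha_power_half assms T_pos by auto

lemma square_iff_even_dlog:
  assumes "even T" "x \<noteq> 0" shows "(\<exists>y. y ^ 2 = x) \<longleftrightarrow> even (dlog \<alpha> x)"
proof
  assume "\<exists>y. y ^ 2 = x"
  then obtain y where y: "y ^ 2 = x" by blast
  then have "y \<noteq> 0" using assms by auto
  then have "x = \<alpha> ^ (2 * dlog \<alpha> y)" using y alpha_power_dlog by (simp add: power_mult mult.commute[of 2])
  then have "dlog \<alpha> x = (2 * dlog \<alpha> y) mod T" using dlog_power by simp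
  then show "even (dlog \<alpha> x)" using assms(1) by (simp add: even_iff_mod_2_eq_zero mod_mod_cancel)
next
  assume "even (dlog \<alpha> x)"
  then obtain j where "dlog \<alpha> x = 2 * j" by blast
  then have "(\<alpha> ^ j) ^ 2 = x" using alpha_power_dlog[OF assms(2)] by (simp flip: power_mult add: mult.commute)
  then show "\<exists>y. y ^ 2 = x" by blast
qed

lemma quadratic_chi: assumes "even T" "x \<noteq> 0"
  shows "chi \<alpha> (-1) x = (if \<exists>y. y ^ 2 = x then 1 else -1)"
  using square_iff_even_dlog[OF assms] assms(2) by (simp add: chi_def)

lemma slce_via_quadratic_chi: assumes "even T"
  shows "2 * of_nat (slce \<alpha> n) =
    1 - chi \<alpha> (-1) (\<alpha> ^ n + 1) - (if \<alpha> ^ n + 1 = 0 then 1 else (0::complex))"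
  using quadratic_chi[OF assms, of "\<alpha> ^ n + 1"] by (auto simp: slce_def chi_def)

text \<open>The substitution \<open>x = \<alpha>^n + 1\<close> turns the twisted character sum into \<open>K\<close>;
  the factor \<open>w^(T/2) = chi w (-1)\<close> comes from \<open>x - 1 = (-1) (1 - x)\<close>.\<close>
lemma twisted_quadratic_sum:
  assumes "even T" "w ^ T = 1"
  shows "(\<Sum>n<T. chi \<alpha> (-1) (\<alpha> ^ n + 1) * w ^ n) = w ^ (T div 2) * Ksum \<alpha> (chi \<alpha> w)"
proof -
  have "(\<Sum>n<T. chi \<alpha> (-1) (\<alpha> ^ n + 1) * w ^ n) = (\<Sum>x\<in>UNIV. chi \<alpha> (-1) (x + 1) * chi \<alpha> w x)"
    using sum_UNIV_powers[of "\<lambda>x. chi \<alpha> (-1) (x + 1) * chi \<alpha> w x"]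
    by (simp add: chi_alpha_power[OF assms(2)])
  also have "\<dots> = (\<Sum>x\<in>UNIV. chi \<alpha> (-1) x * chi \<alpha> w (x - 1))"
    using sum_shift_one[of "\<lambda>x. chi \<alpha> (-1) x * chi \<alpha> w (x - 1)"] by simp
  also have "\<dots> = (\<Sum>x\<in>UNIV. chi \<alpha> w (-1) * (chi \<alpha> (-1) x * chi \<alpha> w (1 - x)))"
    using chi_mult[OF assms(2), of "-1" "1 - _"] by (intro sum.cong) simp_all
  also have "\<dots> = chi \<alpha> w (-1) * Ksum \<alpha> (chi \<alpha> w)"
    by (simp add: Ksum_def sum_distrib_left eta_half)
  also have "chi \<alpha> w (-1) = w ^ (T div 2)"
    using alpha_power_half[OF assms(1)] chi_alpha_power[OF assms(2)] by metis
  finally show ?thesis .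
qed

lemma slce_generating_sum:
  assumes "even T" "w ^ T = 1" "w \<noteq> 1"
  shows "(\<Sum>n<T. 2 * of_nat (slce \<alpha> n) * w ^ n) = - (w ^ (T div 2)) * (Ksum \<alpha> (chi \<alpha> w) + 1)"
proof -
  have "(\<Sum>n<T. (if \<alpha> ^ n + 1 = 0 then 1 else 0) * w ^ n) = (\<Sum>n<T. if n = T div 2 then w ^ n else 0)"
    using alpha_power_eq_minus_1_iff[OF assms(1)]
    by (intro sum.cong) (simp_all flip: eq_neg_iff_add_eq_0)
  also have "\<dots> = w ^ (T div 2)" using T_pos by simp
  finally have minus_one: "(\<Sum>n<T. (if \<alpha> ^ n + 1 = 0 then 1 else 0) * w ^ n) = w ^ (T div 2)" .
  have geometric: "(\<Sum>n<T. w ^ n) = 0" using assms(2,3) by (simp add: geometric_sum)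
  have "(\<Sum>n<T. 2 * of_nat (slce \<alpha> n) * w ^ n) = (\<Sum>n<T. w ^ n)
      - (\<Sum>n<T. chi \<alpha> (-1) (\<alpha> ^ n + 1) * w ^ n) - (\<Sum>n<T. (if \<alpha> ^ n + 1 = 0 then 1 else 0) * w ^ n)"
    by (simp add: slce_via_quadratic_chi[OF assms(1)] algebra_simps flip: sum_subtractf)
  also have "\<dots> = - (w ^ (T div 2)) * (Ksum \<alpha> (chi \<alpha> w) + 1)"
    by (simp only: geometric twisted_quadratic_sum[OF assms(1,2)] minus_one) (simp add: algebra_simps)
  finally show ?thesis .
qed

lemma twisted_generating_sum:
  assumes "4 dvd T" "\<zeta> ^ (T div 2) = 1" "\<zeta> ^ 4 \<noteq> 1" "u ^ 4 = 1"
  shows "(\<Sum>n<T. 2 * of_nat (slce \<alpha> n) * (u * \<zeta>) ^ n) =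
    - (u ^ (T div 2)) * (Ksum \<alpha> (chi \<alpha> (u * \<zeta>)) + 1)"
proof -
  obtain h where h: "T = 4 * h" using assms(1) by auto
  have "\<zeta> ^ T = (\<zeta> ^ (T div 2)) ^ 2" "u ^ T = (u ^ 4) ^ h"
    by (simp_all add: h flip: power_mult)
  then have "(u * \<zeta>) ^ T = 1"
    using assms(2,4) by (simp add: power_mult_distrib)
  moreover have "u * \<zeta> \<noteq> 1"
    using assms(3,4) by (metis mult_1 power_mult_distrib power_one)
  moreover have "(u * \<zeta>) ^ (T div 2) = u ^ (T div 2)"
    using assms(2) by (simp add: power_mult_distrib)
  moreover have "even T" using assms(1) by auto
  ultimately show ?thesis using slce_generating_sum[of "u * \<zeta>"] by simp
qed

text \<open>The four twists by \<open>1, \<i>, -1, -\<i>\<close> filter out the indices \<open>n \<equiv> 3 (mod 4)\<close>.\<close>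
lemma eight_times_sum_hasse3_support:
  assumes "4 dvd T" "\<zeta> ^ (T div 2) = 1" "\<zeta> ^ 4 \<noteq> 1"
  shows "8 * (\<Sum>n\<in>hasse3_support (slce \<alpha>) T. \<zeta> ^ n) =
    - (Ksum \<alpha> (chi \<alpha> \<zeta>) + \<i> ^ (T div 2) * \<i> * Ksum \<alpha> (chi \<alpha> (\<i> * \<zeta>))
       - Ksum \<alpha> (chi \<alpha> (- \<zeta>)) - \<i> ^ (T div 2) * \<i> * Ksum \<alpha> (chi \<alpha> (- \<i> * \<zeta>)))"
proof -
  define G where "G u = (\<Sum>n<T. 2 * of_nat (slce \<alpha> n) * (u * \<zeta>) ^ n)" for u
  have filter: "8 * (if n mod 4 = 3 \<and> slce \<alpha> n = 1 then \<zeta> ^ n else 0) =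
      2 * of_nat (slce \<alpha> n) *
        ((1 * \<zeta>) ^ n + \<i> * (\<i> * \<zeta>) ^ n - (-1 * \<zeta>) ^ n - \<i> * (- \<i> * \<zeta>) ^ n)" for n
  proof -
    have "(1 * \<zeta>) ^ n + \<i> * (\<i> * \<zeta>) ^ n - (-1 * \<zeta>) ^ n - \<i> * (- \<i> * \<zeta>) ^ n =
        (if n mod 4 = 3 then 4 else 0) * \<zeta> ^ n"
      by (simp only: fourth_roots_filter[symmetric] power_mult_distrib) (simp add: algebra_simps)
    then show ?thesis using slce_le_1[of \<alpha> n] by (cases "slce \<alpha> n") auto
  qed
  have "hasse3_support (slce \<alpha>) T = {n \<in> {..<T}. n mod 4 = 3 \<and> slce \<alpha> n = 1}"
    by (auto simp: hasse3_support_def)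
  then have "8 * (\<Sum>n\<in>hasse3_support (slce \<alpha>) T. \<zeta> ^ n) =
      (\<Sum>n<T. 8 * (if n mod 4 = 3 \<and> slce \<alpha> n = 1 then \<zeta> ^ n else 0))"
    by (simp only: sum.inter_filter[OF finite_lessThan] sum_distrib_left)
  also have "\<dots> = G 1 + \<i> * G \<i> - G (-1) - \<i> * G (- \<i>)"
    unfolding filter G_def
    by (simp add: distrib_left right_diff_distrib mult.left_commute sum.distrib sum_subtractf
        sum_distrib_left)
  also have "\<dots> = - (Ksum \<alpha> (chi \<alpha> \<zeta>) + \<i> ^ (T div 2) * \<i> * Ksum \<alpha> (chi \<alpha> (\<i> * \<zeta>))
       - Ksum \<alpha> (chi \<alpha> (- \<zeta>)) - \<i> ^ (T div 2) * \<i> * Ksum \<alpha> (chi \<alpha> (- \<i> * \<zeta>)))"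
  proof -
    have G: "G u = - (u ^ (T div 2)) * (Ksum \<alpha> (chi \<alpha> (u * \<zeta>)) + 1)" if "u ^ 4 = 1" for u
      unfolding G_def by (rule twisted_generating_sum[OF assms that])
    have "even (T div 2)" using assms(1) by (auto elim!: dvdE)
    then have "(-1::complex) ^ (T div 2) = 1" "(- \<i>) ^ (T div 2) = \<i> ^ (T div 2)"
      by (simp_all add: power_minus_even)
    then have G_values: "G 1 = - (Ksum \<alpha> (chi \<alpha> \<zeta>) + 1)"
      "G \<i> = - (\<i> ^ (T div 2)) * (Ksum \<alpha> (chi \<alpha> (\<i> * \<zeta>)) + 1)"
      "G (-1) = - (Ksum \<alpha> (chi \<alpha> (- \<zeta>)) + 1)"
      "G (- \<i>) = - (\<i> ^ (T div 2)) * (Ksum \<alpha> (chi \<alpha> (- \<i> * \<zeta>)) + 1)"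
      using G[of 1] G[of \<i>] G[of "-1"] G[of "- \<i>"] by (simp_all add: eval_nat_numeral)
    show ?thesis unfolding G_values by (simp add: algebra_simps)
  qed
  finally show ?thesis .
qed

lemma Ksum_eta_combination:
  assumes "4 dvd T" "\<zeta> ^ (T div 2) = 1" "\<zeta> ^ 4 \<noteq> 1"
  shows "Ksum \<alpha> (chi \<alpha> \<zeta>)
      + \<i> ^ (T div 2) * zetaN 4 * Ksum \<alpha> (\<lambda>x. eta \<alpha> (1/4) x * chi \<alpha> \<zeta> x)
      - Ksum \<alpha> (\<lambda>x. eta \<alpha> (1/2) x * chi \<alpha> \<zeta> x)
      - \<i> ^ (T div 2) * zetaN 4 * Ksum \<alpha> (\<lambda>x. eta \<alpha> (3/4) x * chi \<alpha> \<zeta> x)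
    = - (8 * (\<Sum>n\<in>hasse3_support (slce \<alpha>) T. \<zeta> ^ n))"
  using eight_times_sum_hasse3_support[OF assms]
  unfolding Ksum_eta_times_chi exp_2pi_i_quarter exp_2pi_i_half exp_2pi_i_three_quarters zetaN_4
  by (simp add: algebra_simps)
end

section \<open>The ideal \<open>8P\<int>[\<zeta>\<^sub>4\<^sub>k]\<close>\<close>

lemma zetaN_4k: assumes "odd k"
  shows "zetaN (4 * k) = (-1) ^ (k div 2) * zetaN k ^ ((k div 2 + 1)^2) * \<i>"
proof -
  define z where "z = zetaN (4 * k)"
  define r where "r = k div 2"
  have k: "k = 2 * r + 1" "k > 0" using assms by (auto simp: r_def intro: odd_pos)
  have z_k: "z ^ k = \<i>" using zetaN_power[of k 4] k(2) by (simp add: z_def zetaN_4 mult.commute)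
  have z_4: "z ^ 4 = zetaN k" using zetaN_power[of 4 k] by (simp add: z_def)
  have z_4k: "z ^ (4 * k) = 1" using zetaN_power_self[of "4 * k"] k(2) by (simp add: z_def)
  have "k * k + 4 * (r + 1)^2 = 1 + 4 * k * (r + 1)" by (simp add: k(1) power2_eq_square algebra_simps)
  then have "(z ^ k) ^ k * (z ^ 4) ^ ((r + 1)^2) = z * (z ^ (4 * k)) ^ (r + 1)"
    by (simp flip: power_mult power_add add: mult.commute)
  then have "z = \<i> ^ k * zetaN k ^ ((r + 1)^2)" by (simp add: z_k z_4 z_4k)
  also have "\<i> ^ k = (-1) ^ r * \<i>" by (simp add: k(1) power_mult)
  finally show ?thesis by (simp add: z_def r_def)
qed

lemma cyc_int_4k_subset: assumes "odd k"
  shows "cyc_int (4 * k) \<subseteq> {c + d * \<i> | c d. c \<in> cyc_int k \<and> d \<in> cyc_int k}"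
proof -
  define e where "e = (-1) ^ (k div 2) * zetaN k ^ ((k div 2 + 1)^2)"
  have e: "e \<in> int_adj (zetaN k)"
    unfolding e_def by (intro int_adj_mult int_adj_power int_adj_uminus int_adj_1 int_adj_gen)
  let ?S = "{c + d * \<i> | c d. c \<in> int_adj (zetaN k) \<and> d \<in> int_adj (zetaN k)}"
  have "int_adj (e * \<i>) \<subseteq> ?S"
  proof (rule int_adj_minimal)
    have "of_int a = of_int a + 0 * \<i>" for a :: int by simp
    then show "of_int a \<in> ?S" for a using int_adj_of_int int_adj_0 by blast
    fix x assume "x \<in> ?S"
    then obtain c d where x: "x = c + d * \<i>" "c \<in> int_adj (zetaN k)" "d \<in> int_adj (zetaN k)"
      by blast
    show "x + y \<in> ?S" if "y \<in> ?S" for y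
    proof -
      obtain c' d' where "y = c' + d' * \<i>" "c' \<in> int_adj (zetaN k)" "d' \<in> int_adj (zetaN k)"
        using \<open>y \<in> ?S\<close> by blast
      with x show ?thesis
        by (intro CollectI exI[of _ "c + c'"] exI[of _ "d + d'"]) (simp add: int_adj_add algebra_simps)
    qed
    have "e * \<i> * x = - (e * d) + (e * c) * \<i>" by (simp add: x algebra_simps)
    then show "e * \<i> * x \<in> ?S" using e x by (blast intro: int_adj_uminus int_adj_mult)
  qed
  then show ?thesis using zetaN_4k[OF assms] by (simp add: cyc_int_eq_int_adj e_def)
qed

lemma is_ideal_diff: "is_ideal R P \<Longrightarrow> x \<in> P \<Longrightarrow> y \<in> P \<Longrightarrow> x - y \<in> P"
  unfolding is_ideal_def by (metis diff_conv_add_uminus)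

lemma is_ideal_uminus_iff: "is_ideal R P \<Longrightarrow> - x \<in> P \<longleftrightarrow> x \<in> P"
  unfolding is_ideal_def by (metis minus_minus)

lemma cyc_int_subset_4k: "k > 0 \<Longrightarrow> cyc_int k \<subseteq> cyc_int (4 * k)"
  using zetaN_power[of 4 k] int_adj_power[OF int_adj_gen, of "zetaN (4 * k)" 4]
  by (simp add: cyc_int_eq_int_adj int_adj_mono)

lemma i_in_cyc_int_4k: "k > 0 \<Longrightarrow> \<i> \<in> cyc_int (4 * k)"
  using zetaN_power[of k 4] int_adj_power[OF int_adj_gen, of "zetaN (4 * k)" k]
  by (simp add: cyc_int_eq_int_adj zetaN_4 mult.commute)

lemma is_ideal_eight_gaussian:
  assumes "odd k" "is_ideal (cyc_int k) P"
  shows "is_ideal (cyc_int (4 * k)) {8 * a + 8 * b * \<i> | a b. a \<in> P \<and> b \<in> P}"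
    (is "is_ideal _ ?J")
  unfolding is_ideal_def
proof (intro conjI ballI)
  have k: "k > 0" using assms(1) by (rule odd_pos)
  have P: "P \<subseteq> cyc_int k" "0 \<in> P" "\<And>x y. x \<in> P \<Longrightarrow> y \<in> P \<Longrightarrow> x + y \<in> P"
    "\<And>x. x \<in> P \<Longrightarrow> - x \<in> P" "\<And>r x. r \<in> cyc_int k \<Longrightarrow> x \<in> P \<Longrightarrow> r * x \<in> P"
    using assms(2) by (auto simp: is_ideal_def)
  show "?J \<subseteq> cyc_int (4 * k)"
  proof
    fix x assume "x \<in> ?J"
    then obtain a b where "x = 8 * a + 8 * b * \<i>" "a \<in> cyc_int (4 * k)" "b \<in> cyc_int (4 * k)"
      using P(1) cyc_int_subset_4k[OF k] by blast
    then show "x \<in> cyc_int (4 * k)"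
      using i_in_cyc_int_4k[OF k] int_adj_of_int[of 8 "zetaN (4 * k)"]
      by (simp add: cyc_int_eq_int_adj int_adj_add int_adj_mult)
  qed
  have "(0::complex) = 8 * 0 + 8 * 0 * \<i>" by simp
  then show "0 \<in> ?J" using P(2) by blast
  fix x assume "x \<in> ?J"
  then obtain a b where x: "x = 8 * a + 8 * b * \<i>" "a \<in> P" "b \<in> P" by blast
  have "- x = 8 * (- a) + 8 * (- b) * \<i>" by (simp add: x)
  then show "- x \<in> ?J" using x P(4) by blast
  show "x + y \<in> ?J" if "y \<in> ?J" for y
  proof -
    obtain a' b' where y: "y = 8 * a' + 8 * b' * \<i>" "a' \<in> P" "b' \<in> P" using \<open>y \<in> ?J\<close> by blast
    have "x + y = 8 * (a + a') + 8 * (b + b') * \<i>" by (simp add: x y algebra_simps)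
    then show ?thesis using x y P(3) by blast
  qed
  show "r * x \<in> ?J" if "r \<in> cyc_int (4 * k)" for r
  proof -
    obtain c d where r: "r = c + d * \<i>" "c \<in> cyc_int k" "d \<in> cyc_int k"
      using cyc_int_4k_subset[OF assms(1)] \<open>r \<in> cyc_int (4 * k)\<close> by blast
    have "r * x = 8 * (c * a - d * b) + 8 * (c * b + d * a) * \<i>"
      by (simp add: r x algebra_simps)
    moreover have "c * a - d * b \<in> P" using r x P(5) is_ideal_diff[OF assms(2)] by simp
    moreover have "c * b + d * a \<in> P" using r x P(3,5) by simp
    ultimately show ?thesis by blast
  qed
qed

lemma eight_mem_ideal_span_iff:
  assumes k: "odd k" and P: "is_prime_ideal (cyc_int k) P" and A: "A \<in> cyc_int k"
  shows "8 * A \<in> ideal_span (cyc_int (4 * k)) ((\<lambda>x. 8 * x) ` P) \<longleftrightarrow> A \<in> P"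
proof
  have ideal: "is_ideal (cyc_int k) P" using P by (simp add: is_prime_ideal_def)
  assume "8 * A \<in> ideal_span (cyc_int (4 * k)) ((\<lambda>x. 8 * x) ` P)"
  moreover have "ideal_span (cyc_int (4 * k)) ((\<lambda>x. 8 * x) ` P) \<subseteq>
      {8 * a + 8 * b * \<i> | a b. a \<in> P \<and> b \<in> P}"
  proof -
    have "8 * a = 8 * a + 8 * 0 * \<i>" for a :: complex by simp
    moreover have "0 \<in> P" using ideal by (simp add: is_ideal_def)
    ultimately have "(\<lambda>x. 8 * x) ` P \<subseteq> {8 * a + 8 * b * \<i> | a b. a \<in> P \<and> b \<in> P}"
      by blast
    then show ?thesis
      using is_ideal_eight_gaussian[OF k ideal] by (auto simp: ideal_span_def)
  qed
  ultimately obtain a b where ab: "8 * A = 8 * a + 8 * b * \<i>" "a \<in> P" "b \<in> P" by blast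
  have "8 * A = 8 * (a + b * \<i>)" using ab(1) by (simp add: algebra_simps)
  then have "A = a + b * \<i>" by (subst (asm) mult_left_cancel) simp_all
  then have "(A - a) * (A - a) = (- b) * b" by (simp add: algebra_simps)
  moreover have "A - a \<in> cyc_int k" "- b \<in> cyc_int k"
    using A ab(2,3) ideal by (auto simp: is_ideal_def cyc_int_eq_int_adj intro: int_adj_diff)
  ultimately have "(A - a) * (A - a) \<in> P"
    using ab(3) ideal by (auto simp: is_ideal_def)
  then have "A - a \<in> P" using P \<open>A - a \<in> cyc_int k\<close> by (auto simp: is_prime_ideal_def)
  then have "(A - a) + a \<in> P" using ab(2) ideal unfolding is_ideal_def by blast
  then show "A \<in> P" by simp
next
  assume "A \<in> P"
  then show "8 * A \<in> ideal_span (cyc_int (4 * k)) ((\<lambda>x. 8 * x) ` P)"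
    by (auto simp: ideal_span_def)
qed

section \<open>Transport along \<open>\<phi>\<close>\<close>

lemma coset_eq_iff:
  assumes "is_ideal R P" shows "coset P x = coset P y \<longleftrightarrow> x - y \<in> P"
proof
  have P: "0 \<in> P" "\<And>u v. u \<in> P \<Longrightarrow> v \<in> P \<Longrightarrow> u + v \<in> P" "\<And>u. u \<in> P \<Longrightarrow> - u \<in> P"
    using assms by (auto simp: is_ideal_def)
  show "x - y \<in> P" if "coset P x = coset P y"
  proof -
    have "x \<in> coset P x" using P(1) unfolding coset_def by (rule rev_image_eqI) simp
    then show ?thesis using that by (auto simp: coset_def)
  qed
  have subset: "coset P u \<subseteq> coset P v" if "u - v \<in> P" for u v
  proof
    fix w assume "w \<in> coset P u"
    then obtain p where "p \<in> P" "w = u + p" by (auto simp: coset_def)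
    then have "(u - v) + p \<in> P" "w = v + ((u - v) + p)" using that P(2) by auto
    then show "w \<in> coset P v" unfolding coset_def by (rule rev_image_eqI)
  qed
  show "coset P x = coset P y" if "x - y \<in> P"
    using subset[OF that] subset[of y x] P(3)[OF that] by simp
qed

locale quotient_iso =
  fixes \<phi> :: "'b::field \<Rightarrow> complex set" and \<beta> :: 'b and R P :: "complex set" and \<zeta> :: complex
  assumes iso: "quot_iso \<phi> (int_adj \<beta>) R P"
    and ideal: "is_ideal R P"
    and R_add: "\<And>x y. x \<in> R \<Longrightarrow> y \<in> R \<Longrightarrow> x + y \<in> R"
    and phi_beta: "\<phi> \<beta> = coset P \<zeta>"
begin

lemma mem_coset_self: "x \<in> coset P x"
  using ideal unfolding coset_def is_ideal_def by (intro rev_image_eqI[of 0]) simp_all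

lemma inj_on_phi: "inj_on \<phi> (int_adj \<beta>)"
  using iso by (simp add: quot_iso_def bij_betw_def)

lemma phi_coset: assumes "a \<in> int_adj \<beta>" obtains r where "r \<in> R" "\<phi> a = coset P r"
proof -
  have "\<phi> ` int_adj \<beta> = coset P ` R" using iso by (simp add: quot_iso_def bij_betw_def quot_set_def)
  then show ?thesis using assms that by blast
qed

lemma phi_add_mult:
  assumes "a \<in> int_adj \<beta>" "b \<in> int_adj \<beta>" "\<phi> a = coset P x" "\<phi> b = coset P y"
  shows "\<phi> (a + b) = coset P (x + y)" and "\<phi> (a * b) = coset P (x * y)"
proof -
  have "x \<in> \<phi> a" "y \<in> \<phi> b" using assms(3,4) mem_coset_self by simp_all
  moreover note conjunct2[OF iso[unfolded quot_iso_def]]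
  ultimately have "\<phi> (a + b) = coset P (x + y) \<and> \<phi> (a * b) = coset P (x * y)"
    using assms(1,2) by blast
  then show "\<phi> (a + b) = coset P (x + y)" "\<phi> (a * b) = coset P (x * y)" by simp_all
qed

lemma phi_zero: "\<phi> 0 = coset P 0"
proof -
  obtain r where r: "r \<in> R" "\<phi> 0 = coset P r" using phi_coset[OF int_adj_0] .
  have "coset P r = coset P (r + r)" using phi_add_mult(1)[OF int_adj_0 int_adj_0 r(2) r(2)] r(2) by simp
  then have "r \<in> P" using coset_eq_iff[OF ideal, of r "r + r"] ideal by (auto simp: is_ideal_def)
  then show ?thesis using r(2) coset_eq_iff[OF ideal, of r 0] by simp
qed

lemma phi_eq_zero_iff: assumes "a \<in> int_adj \<beta>" shows "\<phi> a = coset P 0 \<longleftrightarrow> a = 0"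
  using inj_on_eq_iff[OF inj_on_phi assms int_adj_0] phi_zero by simp

lemma zeta_in_R: "\<zeta> \<in> R"
proof -
  obtain r where r: "r \<in> R" "\<phi> \<beta> = coset P r" using phi_coset[OF int_adj_gen] .
  then have "\<zeta> - r \<in> P" using phi_beta coset_eq_iff[OF ideal] by simp
  then have "\<zeta> - r \<in> R" using ideal by (auto simp: is_ideal_def)
  then have "(\<zeta> - r) + r \<in> R" using r(1) R_add by blast
  then show ?thesis by simp
qed

lemma phi_power: "n > 0 \<Longrightarrow> \<phi> (\<beta> ^ n) = coset P (\<zeta> ^ n)"
proof (induction n rule: nat_induct_non_zero)
  case (Suc n)
  then show ?case
    using phi_add_mult(2)[OF int_adj_gen int_adj_power[OF int_adj_gen] phi_beta] by simp
qed (simp add: phi_beta)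

lemma phi_sum_powers: "finite N \<Longrightarrow> 0 \<notin> N \<Longrightarrow> \<phi> (\<Sum>n\<in>N. \<beta> ^ n) = coset P (\<Sum>n\<in>N. \<zeta> ^ n)"
proof (induction N rule: finite_induct)
  case (insert n N)
  have "\<phi> (\<beta> ^ n + (\<Sum>n\<in>N. \<beta> ^ n)) = coset P (\<zeta> ^ n + (\<Sum>n\<in>N. \<zeta> ^ n))"
    using insert phi_power[of n]
    by (intro phi_add_mult(1) int_adj_power int_adj_gen int_adj_sum) auto
  then show ?case using insert by simp
qed (simp add: phi_zero)

lemma sum_powers_eq_0_iff:
  assumes "finite N" "0 \<notin> N"
  shows "(\<Sum>n\<in>N. \<beta> ^ n) = 0 \<longleftrightarrow> (\<Sum>n\<in>N. \<zeta> ^ n) \<in> P"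
proof -
  have "(\<Sum>n\<in>N. \<beta> ^ n) \<in> int_adj \<beta>" by (intro int_adj_sum int_adj_power int_adj_gen)
  then have "(\<Sum>n\<in>N. \<beta> ^ n) = 0 \<longleftrightarrow> \<phi> (\<Sum>n\<in>N. \<beta> ^ n) = coset P 0"
    by (rule phi_eq_zero_iff[symmetric])
  also have "\<dots> \<longleftrightarrow> (\<Sum>n\<in>N. \<zeta> ^ n) \<in> P"
    using phi_sum_powers[OF assms] coset_eq_iff[OF ideal] by simp
  finally show ?thesis .
qed

lemma zeta_ne_1: assumes "\<beta> \<noteq> 0" "\<beta> \<noteq> 1" shows "\<zeta> \<noteq> 1"
proof
  assume "\<zeta> = 1"
  then have "\<phi> (\<beta> * \<beta>) = \<phi> \<beta>" using phi_add_mult(2)[OF int_adj_gen int_adj_gen phi_beta phi_beta] phi_beta by simp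
  then have "\<beta> * \<beta> = \<beta>"
    using inj_on_eq_iff[OF inj_on_phi int_adj_mult[OF int_adj_gen int_adj_gen] int_adj_gen] by simp
  then show False using assms by simp
qed

lemma hasse_eval_3_eq_0_iff:
  assumes "\<And>n. s n \<le> 1" "\<beta> \<noteq> 0"
  shows "hasse_eval s T 3 \<beta> = 0 \<longleftrightarrow> (\<Sum>n\<in>hasse3_support s T. \<zeta> ^ n) \<in> P"
proof -
  have "hasse_eval s T 3 \<beta> = 0 \<longleftrightarrow> hasse_eval s T 3 \<beta> * \<beta> ^ 3 = 0" using assms(2) by simp
  also have "\<dots> \<longleftrightarrow> (\<Sum>n\<in>hasse3_support s T. \<zeta> ^ n) \<in> P"
    unfolding hasse_eval_3[OF assms(1)]
    by (rule sum_powers_eq_0_iff[OF finite_hasse3_support zero_notin_hasse3_support])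
  finally show ?thesis .
qed
end

theorem mainTheorem5:
  fixes p m :: nat and \<alpha> :: "'a::{field,finite}" and \<beta> :: "'b::field" and k :: nat
    and P :: "complex set" and \<phi> :: "'b \<Rightarrow> complex set" and \<zeta> :: complex
  assumes p: "prime p" "odd p" and m: "m \<ge> 1" and q: "card (UNIV::'a set) = p ^ m"
    and alpha: "primitive_elem \<alpha>"
    and char2: "(2::'b) = 0"
    and betaT: "\<beta> ^ (card (UNIV::'a set) - 1) = 1" and ord: "mult_order \<beta> k" and k1: "k > 1"
    and P: "is_prime_ideal (cyc_int k) P" "2 \<in> P"
    and phi: "quot_iso \<phi> (F2_adj \<beta>) (cyc_int k) P"
    and zeta: "\<zeta> ^ k = 1" "\<phi> \<beta> = coset P \<zeta>"
    and q4: "card (UNIV::'a set) mod 4 = 1"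
  shows "hasse_eval (slce \<alpha>) (card (UNIV::'a set) - 1) 3 \<beta> = 0 \<longleftrightarrow>
    (if card (UNIV::'a set) mod 8 = 1 then
       Ksum \<alpha> (chi \<alpha> \<zeta>) + zetaN 4 * Ksum \<alpha> (\<lambda>x. eta \<alpha> (1/4) x * chi \<alpha> \<zeta> x)
       - Ksum \<alpha> (\<lambda>x. eta \<alpha> (1/2) x * chi \<alpha> \<zeta> x) - zetaN 4 * Ksum \<alpha> (\<lambda>x. eta \<alpha> (3/4) x * chi \<alpha> \<zeta> x)
       \<in> ideal_span (cyc_int (4 * k)) ((\<lambda>x. 8 * x) ` P)
     else
       Ksum \<alpha> (chi \<alpha> \<zeta>) - zetaN 4 * Ksum \<alpha> (\<lambda>x. eta \<alpha> (1/4) x * chi \<alpha> \<zeta> x)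
       - Ksum \<alpha> (\<lambda>x. eta \<alpha> (1/2) x * chi \<alpha> \<zeta> x) + zetaN 4 * Ksum \<alpha> (\<lambda>x. eta \<alpha> (3/4) x * chi \<alpha> \<zeta> x)
       \<in> ideal_span (cyc_int (4 * k)) ((\<lambda>x. 8 * x) ` P))"
proof -
  define T where "T = card (UNIV::'a set) - 1"
  interpret primitive_root \<alpha> T using alpha T_def by unfold_locales
  interpret quotient_iso \<phi> \<beta> "cyc_int k" P \<zeta>
    using phi P(1) zeta(2) by unfold_locales
      (auto simp: is_prime_ideal_def F2_adj_eq_int_adj cyc_int_eq_int_adj intro: int_adj_add)
  have T4: "4 dvd T" using q4 finite_field_card_ge_2[where 'a='a] unfolding T_def by presburger
  have beta: "\<beta> \<noteq> 0" "\<beta> \<noteq> 1" using ord k1 by (auto simp: mult_order_def power_0_left)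
  have k_odd: "odd k" by (rule mult_order_odd_char_2[OF char2 ord])
  have "k dvd T div 2" using mult_order_dvd_half[OF ord k_odd betaT[folded T_def]] T4 by auto
  then have zeta_half: "\<zeta> ^ (T div 2) = 1" using zeta(1) by (auto simp: power_mult elim!: dvdE)
  have zeta_4: "\<zeta> ^ 4 \<noteq> 1"
    using odd_root_of_unity_fourth_power[OF k_odd zeta(1)] zeta_ne_1[OF beta] by blast
  define A where "A = (\<Sum>n\<in>hasse3_support (slce \<alpha>) T. \<zeta> ^ n)"
  have "A \<in> cyc_int k"
    unfolding A_def using zeta_in_R by (simp add: cyc_int_eq_int_adj int_adj_sum int_adj_power)
  then have span: "- (8 * A) \<in> ideal_span (cyc_int (4 * k)) ((\<lambda>x. 8 * x) ` P) \<longleftrightarrow> A \<in> P"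
    using eight_mem_ideal_span_iff[OF k_odd P(1), of "- A"] ideal
    by (simp add: cyc_int_eq_int_adj int_adj_uminus is_ideal_uminus_iff)
  have "\<i> ^ (T div 2) = (if card (UNIV::'a set) mod 8 = 1 then 1 else -1)"
    unfolding T_def by (rule i_power_half_pred[OF q4])
  then show ?thesis
    using Ksum_eta_combination[OF T4 zeta_half zeta_4] span
      hasse_eval_3_eq_0_iff[of "slce \<alpha>" T, OF slce_le_1 beta(1)]
    unfolding A_def T_def[symmetric]
    by (cases "card (UNIV::'a set) mod 8 = 1") simp_all
qed

end
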